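(* For $n\ge2$ and all $P,Q\in\Gamma_n$, $D_{h\Delta}(P\|Q)\le 3D_{hI}(P\|Q)$.
   Context: $\Gamma_n=\{P=(p_1,\dots,p_n): p_i>0,\ \sum p_i=1\}$. $h(P\|Q)=\frac12\sum_{i=1}^n(\sqrt{p_i}-\sqrt{q_i})^2$; $\Delta(P\|Q)=\sum_{i=1}^n\frac{(p_i-q_i)^2}{p_i+q_i}$; $I(P\|Q)=\frac12\Big[\sum_{i=1}^n p_i\ln\frac{2p_i}{p_i+q_i}+\sum_{i=1}^n q_i\ln\frac{2q_i}{p_i+q_i}\Big]$. $D_{h\Delta}=h-\frac14\Delta$, $D_{hI}=h-I$. *)

theory Defs
  imports Complex_Main
begin

definition Gamma :: "nat \<Rightarrow> (nat \<Rightarrow> real) set" where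
  "Gamma n = {p. (\<forall>i<n. p i > 0) \<and> (\<Sum>i<n. p i) = 1}"

definition hellinger :: "nat \<Rightarrow> (nat \<Rightarrow> real) \<Rightarrow> (nat \<Rightarrow> real) \<Rightarrow> real" where
  "hellinger n p q = (1/2) * (\<Sum>i<n. (sqrt (p i) - sqrt (q i))^2)"

definition triangular :: "nat \<Rightarrow> (nat \<Rightarrow> real) \<Rightarrow> (nat \<Rightarrow> real) \<Rightarrow> real" where
  "triangular n p q = (\<Sum>i<n. (p i - q i)^2 / (p i + q i))"

definition jensen_shannon :: "nat \<Rightarrow> (nat \<Rightarrow> real) \<Rightarrow> (nat \<Rightarrow> real) \<Rightarrow> real" where
  "jensen_shannon n p q = (1/2) * ((\<Sum>i<n. p i * ln (2 * p i / (p i + q i)))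
      + (\<Sum>i<n. q i * ln (2 * q i / (p i + q i))))"

definition D_hDelta :: "nat \<Rightarrow> (nat \<Rightarrow> real) \<Rightarrow> (nat \<Rightarrow> real) \<Rightarrow> real" where
  "D_hDelta n p q = hellinger n p q - (1/4) * triangular n p q"

definition D_hI :: "nat \<Rightarrow> (nat \<Rightarrow> real) \<Rightarrow> (nat \<Rightarrow> real) \<Rightarrow> real" where
  "D_hI n p q = hellinger n p q - jensen_shannon n p q"

end

theory Submission
  imports Defs "HOL-Analysis.Derivative"
begin

text \<open>
  Both sides are sums over i of terms depending only on a = P i and b = Q i, so it suffices
  to show 3/2 (a ln (2a/(a+b)) + b ln (2b/(a+b))) \<le> (sqrt a - sqrt b)^2 + (a-b)^2/(4(a+b))
  for a, b > 0.  Both sides are homogeneous of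
  degree one, so with t = (a-b)/(a+b) the inequality becomes sym_gap t \<ge> 0 on (-1,1), where
  sym_gap t is the right-hand side minus the left-hand side at a = 1+t, b = 1-t.  Now
  sym_gap vanishes to second order at 0, and with r = sqrt (1-t^2) its second derivative is
  (1-r)^2 (r+2)/r^3 \<ge> 0, so sym_gap is convex and lies above its tangent at 0.
\<close>

definition sym_gap :: "real \<Rightarrow> real" where
  "sym_gap t = 2 - 2 * sqrt (1 - t^2) + t^2 / 2
     - 3/2 * ((1 + t) * ln (1 + t) + (1 - t) * ln (1 - t))"

definition sym_gap_deriv :: "real \<Rightarrow> real" where
  "sym_gap_deriv t = 2 * t / sqrt (1 - t^2) + t - 3/2 * (ln (1 + t) - ln (1 - t))"

lemma sym_gap_has_real_derivative:
  assumes "\<bar>t\<bar> < 1"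
  shows "(sym_gap has_real_derivative sym_gap_deriv t) (at t)"
proof -
  have "0 < 1 - t^2"
    using assms by (simp add: abs_square_less_1)
  then show ?thesis
    unfolding sym_gap_def [abs_def] sym_gap_deriv_def
    using assms by (auto intro!: derivative_eq_intros) (simp add: field_simps)
qed

lemma sym_gap_deriv_has_real_derivative:
  assumes "\<bar>t\<bar> < 1"
  shows "(sym_gap_deriv has_real_derivative 2 / sqrt (1 - t^2)^3 + 1 - 3 / (1 - t^2)) (at t)"
proof -
  define r where "r = sqrt (1 - t^2)"
  have pos: "0 < 1 - t^2"
    using assms by (simp add: abs_square_less_1)
  then have r: "0 < r" "r^2 = 1 - t^2"
    by (simp_all add: r_def)
  have "2 * r + 2 * t * (inverse r * t) = 2 * (r^2 + t^2) / r"
    using r by (simp add: field_simps power2_eq_square)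
  then have inner: "(2 * r + 2 * t * (inverse r * t)) / (1 - t^2) = 2 / r^3"
    using r by (simp add: power2_eq_square power3_eq_cube)
  have outer: "(6 / (1 + t) + 6 / (1 - t)) / 4 = 3 / (1 - t^2)"
    using assms pos by (simp add: field_simps power2_eq_square)
  show ?thesis
    unfolding sym_gap_deriv_def [abs_def]
    using assms pos
    by (auto intro!: derivative_eq_intros) (simp only: inner [unfolded r_def] outer)
qed

lemma sym_gap_second_deriv_nonneg:
  assumes "\<bar>t\<bar> < 1"
  shows "0 \<le> 2 / sqrt (1 - t^2)^3 + 1 - 3 / (1 - t^2)"
proof -
  define r where "r = sqrt (1 - t^2)"
  have "0 < 1 - t^2"
    using assms by (simp add: abs_square_less_1)
  then have r: "0 < r" "1 - t^2 = r^2"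
    by (simp_all add: r_def)
  have "2 / r^3 + 1 - 3 / r^2 = (1 - r)^2 * (r + 2) / r^3"
    using r by (simp add: field_simps power2_eq_square power3_eq_cube)
  then show ?thesis
    using r by (simp add: r_def [symmetric])
qed

lemma convex_on_sym_gap: "convex_on {-1<..<1} sym_gap"
  by (rule f''_ge0_imp_convex [OF convex_real_interval(8) sym_gap_has_real_derivative
        sym_gap_deriv_has_real_derivative sym_gap_second_deriv_nonneg]) auto

lemma sym_gap_nonneg:
  assumes "\<bar>t\<bar> < 1"
  shows "0 \<le> sym_gap t"
proof -
  have "(sym_gap has_real_derivative 0) (at 0)"
    using sym_gap_has_real_derivative [of 0] by (simp add: sym_gap_deriv_def)
  then have "0 * (t - 0) \<le> sym_gap t - sym_gap 0"
    using assms
    by (intro convex_on_imp_above_tangent [OF convex_on_sym_gap _ _ _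
          has_field_derivative_at_within]) (auto simp: interior_open)
  then show ?thesis
    by (simp add: sym_gap_def)
qed

lemma jensen_shannon_term_le:
  fixes a b :: real
  assumes a: "0 < a" and b: "0 < b"
  shows "3/2 * (a * ln (2 * a / (a + b)) + b * ln (2 * b / (a + b)))
           \<le> (sqrt a - sqrt b)^2 + (a - b)^2 / (4 * (a + b))"
proof -
  define s where "s = a + b"
  define t where "t = (a - b) / s"
  have s: "0 < s"
    using a b by (simp add: s_def)
  have plus: "1 + t = 2 * a / s" and minus: "1 - t = 2 * b / s"
    using s by (simp_all add: t_def s_def field_simps)
  have t: "\<bar>t\<bar> < 1"
    using plus minus a b s by (smt (verit) divide_pos_pos)
  have "1 - t^2 = (1 + t) * (1 - t)"
    by (simp add: algebra_simps power2_eq_square)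
  also have "\<dots> = (2 * sqrt a * sqrt b / s)^2"
    using a b by (simp add: plus minus power2_eq_square field_simps)
  finally have root: "sqrt (1 - t^2) = 2 * sqrt a * sqrt b / s"
    using a b s by simp
  have "s / 2 * sym_gap t = s - 2 * sqrt a * sqrt b + s * t^2 / 4
          - 3/2 * (a * ln (2 * a / s) + b * ln (2 * b / s))"
    unfolding sym_gap_def root plus minus using s by (simp add: field_simps)
  also have "s - 2 * sqrt a * sqrt b = (sqrt a - sqrt b)^2"
    using a b by (simp add: s_def power2_eq_square algebra_simps)
  also have "s * t^2 / 4 = (a - b)^2 / (4 * s)"
    using s by (simp add: t_def power2_eq_square field_simps)
  finally have "s / 2 * sym_gap t = (sqrt a - sqrt b)^2 + (a - b)^2 / (4 * (a + b))
                  - 3/2 * (a * ln (2 * a / (a + b)) + b * ln (2 * b / (a + b)))"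
    unfolding s_def .
  moreover have "0 \<le> s / 2 * sym_gap t"
    using s sym_gap_nonneg [OF t] by simp
  ultimately show ?thesis
    by linarith
qed

lemma three_jensen_shannon_le:
  assumes "\<And>i. i < n \<Longrightarrow> 0 < P i \<and> 0 < Q i"
  shows "3 * jensen_shannon n P Q \<le> 2 * hellinger n P Q + 1/4 * triangular n P Q"
proof -
  have "3 * jensen_shannon n P Q
          = (\<Sum>i<n. 3/2 * (P i * ln (2 * P i / (P i + Q i)) + Q i * ln (2 * Q i / (P i + Q i))))"
    unfolding jensen_shannon_def by (simp only: sum.distrib [symmetric] sum_distrib_left) simp
  also have "\<dots> \<le> (\<Sum>i<n. (sqrt (P i) - sqrt (Q i))^2 + (P i - Q i)^2 / (4 * (P i + Q i)))"
    using assms by (intro sum_mono jensen_shannon_term_le) auto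
  also have "\<dots> = 2 * hellinger n P Q + 1/4 * triangular n P Q"
    by (simp add: hellinger_def triangular_def sum.distrib sum_distrib_left sum_divide_distrib)
  finally show ?thesis .
qed

theorem proposition5p2:
  fixes n :: nat and P Q :: "nat \<Rightarrow> real"
  assumes "n \<ge> 2" and "P \<in> Gamma n" and "Q \<in> Gamma n"
  shows "D_hDelta n P Q \<le> 3 * D_hI n P Q"
proof -
  have "3 * jensen_shannon n P Q \<le> 2 * hellinger n P Q + 1/4 * triangular n P Q"
    using assms(2,3) by (intro three_jensen_shannon_le) (auto simp: Gamma_def)
  then show ?thesis
    by (simp add: D_hDelta_def D_hI_def)
qed

end
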